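(* Let $\mathsf{M}=(E,\mathcal{L})$ be a loopless matroid. For any subset $S\subseteq E$, with $\rho_S:A^*(\mathsf{M}|_S)\to A^*(\mathsf{M})$ the homomorphism defined by $\rho_S(D_G)=\sum_{G'\in\mathcal{L}^*,\ G\subseteq G'\subseteq G\cup(E\setminus S)}D_{G'}$, we have \[ \rho_S(\psi_0)=\psi_0-\sum_{G\in\mathcal{L}^*,\ G\subseteq E\setminus S} D_{G}\qquad\text{and}\qquad\rho_S(\psi_\infty)=\psi_\infty-\sum_{G\in\mathcal{L}^*,\ G\supseteq S} D_{G}, \] where on the left $\psi_0,\psi_\infty$ are the classes of $\mathsf{M}|_S$ and on the right those of $\mathsf{M}$. In particular, if $F\in\mathcal{L}^*$ is a proper flat, then \[ \psi_F^-=\rho_F(\psi_\infty)\qquad\text{and}\qquad\psi_F^+=\rho_{E\setminus F}(\psi_0). \]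
   Context: A matroid $\mathsf{M}=(E,\mathcal{L})$ consists of a finite ground set $E$ and a collection $\mathcal{L}\subseteq 2^E$ of flats such that (1) the intersection of two flats is a flat, and (2) for every flat $F$, every element of $E\setminus F$ lies in exactly one flat minimal among flats strictly containing $F$. It is loopless if $\emptyset\in\mathcal{L}$. Write $\mathcal{L}^*=\mathcal{L}\setminus\{\emptyset,E\}$. The restriction $\mathsf{M}|_S$ is the matroid on ground set $S$ with flats $\{F\cap S\mid F\in\mathcal{L}\}$. For a loopless matroid $\mathsf{N}=(E',\mathcal{L}')$, the Chow ring is $A^*(\mathsf{N})=\mathbb{Z}[X_F\mid F\in\mathcal{L}'^*]/(\mathcal{I}+\mathcal{J})$, where $\mathcal{L}'^*=\mathcal{L}'\setminus\{\emptyset,E'\}$, $\mathcal{I}$ is generated by $X_{F_1}X_{F_2}$ for incomparable $F_1,F_2$, and $\mathcal{J}$ by $\sum_{F\in\mathcal{L}'^*,\,e\in F}X_F-\sum_{F\in\mathcal{L}'^*,\,f\in F}X_F$ for $e,f\in E'$; $D_F$ is the class of $X_F$. The map $\rho_S$ is a well-defined ring homomorphism. For any flat $F\in\mathcal{L}'$ and any $e\in E'$, $\psi_F^-=\sum_{G\in\mathcal{L}'^*,\ e\in G}D_G-\sum_{G\in\mathcal{L}'^*,\ G\supseteq F}D_G$ and $\psi_F^+=\sum_{G\in\mathcal{L}'^*,\ e\notin G}D_G-\sum_{G\in\mathcal{L}'^*,\ G\subseteq F}D_G$ (independent of $e$); $\psi_0=\psi_\emptyset^+=\sum_{G\in\mathcal{L}'^*,\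 e\notin G}D_G$ and $\psi_\infty=\psi_{E'}^-=\sum_{G\in\mathcal{L}'^*,\ e\in G}D_G$. *)

theory Defs
  imports Main "HOL-Library.Poly_Mapping"
begin

definition matroid :: "'a set \<Rightarrow> 'a set set \<Rightarrow> bool" where
  "matroid E L \<longleftrightarrow> finite E \<and> L \<subseteq> Pow E
     \<and> (\<forall>F1\<in>L. \<forall>F2\<in>L. F1 \<inter> F2 \<in> L)
     \<and> (\<forall>F\<in>L. \<forall>x\<in>E - F. \<exists>!G. G \<in> L \<and> F \<subset> G
            \<and> (\<nexists>H. H \<in> L \<and> F \<subset> H \<and> H \<subset> G) \<and> x \<in> G)"

definition loopless :: "'a set \<Rightarrow> 'a set set \<Rightarrow> bool" where
  "loopless E L \<longleftrightarrow> matroid E L \<and> {} \<in> L"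

definition restr_flats :: "'a set set \<Rightarrow> 'a set \<Rightarrow> 'a set set" where
  "restr_flats L S = {F \<inter> S | F. F \<in> L}"

definition Lstar :: "'a set \<Rightarrow> 'a set set \<Rightarrow> 'a set set" where
  "Lstar E L = L - {{}, E}"

type_synonym 'a mpoly = "('a set \<Rightarrow>\<^sub>0 nat) \<Rightarrow>\<^sub>0 int"

definition Var :: "'a set \<Rightarrow> 'a mpoly" where
  "Var F = Poly_Mapping.single (Poly_Mapping.single F 1) 1"

inductive_set gen_ideal :: "'r::comm_ring_1 set \<Rightarrow> 'r set" for B where
  base: "g \<in> B \<Longrightarrow> g \<in> gen_ideal B"
| zero: "0 \<in> gen_ideal B"
| add: "a \<in> gen_ideal B \<Longrightarrow> b \<in> gen_ideal B \<Longrightarrow> a + b \<in> gen_ideal B"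
| mult: "a \<in> gen_ideal B \<Longrightarrow> r * a \<in> gen_ideal B"

definition chow_gens :: "'a set \<Rightarrow> 'a set set \<Rightarrow> 'a mpoly set" where
  "chow_gens E L =
     {Var F1 * Var F2 | F1 F2. F1 \<in> Lstar E L \<and> F2 \<in> Lstar E L
                              \<and> \<not> F1 \<subseteq> F2 \<and> \<not> F2 \<subseteq> F1}
   \<union> {(\<Sum>F\<in>{F\<in>Lstar E L. e \<in> F}. Var F) - (\<Sum>F\<in>{F\<in>Lstar E L. f \<in> F}. Var F)
       | e f. e \<in> E \<and> f \<in> E}"

definition chow_eq :: "'a set \<Rightarrow> 'a set set \<Rightarrow> 'a mpoly \<Rightarrow> 'a mpoly \<Rightarrow> bool" where
  "chow_eq E L p q \<longleftrightarrow> p - q \<in> gen_ideal (chow_gens E L)"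

section \<open>Psi classes (representatives; e is the auxiliary element)\<close>

definition psi0 :: "'a set \<Rightarrow> 'a set set \<Rightarrow> 'a \<Rightarrow> 'a mpoly" where
  "psi0 E L e = (\<Sum>G\<in>{G\<in>Lstar E L. e \<notin> G}. Var G)"

definition psi_inf :: "'a set \<Rightarrow> 'a set set \<Rightarrow> 'a \<Rightarrow> 'a mpoly" where
  "psi_inf E L e = (\<Sum>G\<in>{G\<in>Lstar E L. e \<in> G}. Var G)"

definition psi_minus :: "'a set \<Rightarrow> 'a set set \<Rightarrow> 'a set \<Rightarrow> 'a \<Rightarrow> 'a mpoly" where
  "psi_minus E L F e = (\<Sum>G\<in>{G\<in>Lstar E L. e \<in> G}. Var G) - (\<Sum>G\<in>{G\<in>Lstar E L. F \<subseteq> G}. Var G)"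

definition psi_plus :: "'a set \<Rightarrow> 'a set set \<Rightarrow> 'a set \<Rightarrow> 'a \<Rightarrow> 'a mpoly" where
  "psi_plus E L F e = (\<Sum>G\<in>{G\<in>Lstar E L. e \<notin> G}. Var G) - (\<Sum>G\<in>{G\<in>Lstar E L. G \<subseteq> F}. Var G)"

definition subst_mon :: "('a set \<Rightarrow> 'a mpoly) \<Rightarrow> ('a set \<Rightarrow>\<^sub>0 nat) \<Rightarrow> 'a mpoly" where
  "subst_mon \<sigma> mon = (\<Prod>G\<in>Poly_Mapping.keys mon. (\<sigma> G) ^ (Poly_Mapping.lookup mon G))"

definition subst :: "('a set \<Rightarrow> 'a mpoly) \<Rightarrow> 'a mpoly \<Rightarrow> 'a mpoly" where
  "subst \<sigma> p = (\<Sum>mon\<in>Poly_Mapping.keys p. of_int (Poly_Mapping.lookup p mon) * subst_mon \<sigma> mon)"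

definition rho_img :: "'a set \<Rightarrow> 'a set set \<Rightarrow> 'a set \<Rightarrow> 'a set \<Rightarrow> 'a mpoly" where
  "rho_img E L S G = (\<Sum>G'\<in>{G'\<in>Lstar E L. G \<subseteq> G' \<and> G' \<subseteq> G \<union> (E - S)}. Var G')"

definition rho :: "'a set \<Rightarrow> 'a set set \<Rightarrow> 'a set \<Rightarrow> 'a mpoly \<Rightarrow> 'a mpoly" where
  "rho E L S p = subst (rho_img E L S) p"

end

theory Submission
  imports Defs
begin

text \<open>For G \<subseteq> S the flats G' with G \<subseteq> G' \<subseteq> G \<union> (E - S) are exactly those with G' \<inter> S = G,
  so rho_S sends the sum of the D_G over a set T of flats of M|S to the sum of the D_G' over the
  flats G' of M with G' \<inter> S \<in> T. For e \<in> S, a flat G' of M avoiding (containing) e has a proper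
  nonempty trace on S iff G' is not contained in E - S (iff G' does not contain S). This gives both
  formulas with the same e on the two sides; modulo the linear relations J the choice of e does
  not matter, for psi_0 because it is the sum of all D_G minus psi_inf.\<close>

lemma subst_eq_sum_superset:
  assumes "finite K" "Poly_Mapping.keys p \<subseteq> K"
  shows "subst \<sigma> p = (\<Sum>mon\<in>K. of_int (Poly_Mapping.lookup p mon) * subst_mon \<sigma> mon)"
  unfolding subst_def
  by (rule sum.mono_neutral_left[OF assms]) (auto simp: in_keys_iff)

lemma subst_add: "subst \<sigma> (p + q) = subst \<sigma> p + subst \<sigma> q"
proof -
  let ?K = "Poly_Mapping.keys p \<union> Poly_Mapping.keys q"
  let ?term = "\<lambda>r mon. of_int (Poly_Mapping.lookup r mon) * subst_mon \<sigma> mon"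
  have "subst \<sigma> (p + q) = (\<Sum>mon\<in>?K. ?term (p + q) mon)"
    by (rule subst_eq_sum_superset) (simp_all add: keys_add)
  also have "\<dots> = (\<Sum>mon\<in>?K. ?term p mon) + (\<Sum>mon\<in>?K. ?term q mon)"
    by (simp add: lookup_add distrib_right sum.distrib)
  also have "\<dots> = subst \<sigma> p + subst \<sigma> q"
    by (simp add: subst_eq_sum_superset[of ?K])
  finally show ?thesis .
qed

lemma subst_0 [simp]: "subst \<sigma> 0 = 0"
  by (simp add: subst_def)

lemma subst_Var [simp]: "subst \<sigma> (Var G) = \<sigma> G"
  by (simp add: subst_def Var_def subst_mon_def lookup_single)

lemma subst_sum_Var: "subst \<sigma> (\<Sum>G\<in>T. Var G) = (\<Sum>G\<in>T. \<sigma> G)"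
  by (induction T rule: infinite_finite_induct) (simp_all add: subst_add)

lemma finite_Lstar: "matroid E L \<Longrightarrow> finite (Lstar E L)"
  unfolding matroid_def Lstar_def by (meson finite_Diff finite_Pow_iff rev_finite_subset)

lemma Lstar_subset_ground: "matroid E L \<Longrightarrow> G \<in> Lstar E L \<Longrightarrow> G \<subseteq> E"
  by (auto simp: matroid_def Lstar_def)

lemma Lstar_restr_flats_subset_Pow: "Lstar S (restr_flats L S) \<subseteq> Pow S"
  by (auto simp: Lstar_def restr_flats_def)

lemma Int_in_Lstar_restr_flats_iff:
  "G \<in> Lstar E L \<Longrightarrow> G \<inter> S \<in> Lstar S (restr_flats L S) \<longleftrightarrow> G \<inter> S \<noteq> {} \<and> G \<inter> S \<noteq> S"
  by (auto simp: Lstar_def restr_flats_def)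

lemma rho_img_eq_sum_fibre:
  assumes "matroid E L" "G \<subseteq> S"
  shows "rho_img E L S G = (\<Sum>G'\<in>{G'\<in>Lstar E L. G' \<inter> S = G}. Var G')"
proof -
  have "{G'\<in>Lstar E L. G \<subseteq> G' \<and> G' \<subseteq> G \<union> (E - S)} = {G'\<in>Lstar E L. G' \<inter> S = G}"
    using \<open>G \<subseteq> S\<close> Lstar_subset_ground[OF \<open>matroid E L\<close>] by blast
  then show ?thesis by (simp add: rho_img_def)
qed

lemma rho_sum_Var:
  assumes M: "matroid E L" and "S \<subseteq> E" and T: "T \<subseteq> Pow S"
  shows "rho E L S (\<Sum>G\<in>T. Var G) = (\<Sum>G'\<in>{G'\<in>Lstar E L. G' \<inter> S \<in> T}. Var G')"
proof -
  let ?U = "{G'\<in>Lstar E L. G' \<inter> S \<in> T}"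
  have "finite S" using M \<open>S \<subseteq> E\<close> by (auto simp: matroid_def intro: finite_subset)
  then have "finite T" using T by (simp add: finite_subset)
  have "rho E L S (\<Sum>G\<in>T. Var G) = (\<Sum>G\<in>T. rho_img E L S G)"
    by (simp add: rho_def subst_sum_Var)
  also have "\<dots> = (\<Sum>G\<in>T. \<Sum>G'\<in>{G'. G' \<in> ?U \<and> G' \<inter> S = G}. Var G')"
  proof (rule sum.cong[OF refl])
    fix G assume "G \<in> T"
    then have "{G'\<in>Lstar E L. G' \<inter> S = G} = {G'. G' \<in> ?U \<and> G' \<inter> S = G}" by auto
    then show "rho_img E L S G = (\<Sum>G'\<in>{G'. G' \<in> ?U \<and> G' \<inter> S = G}. Var G')"
      using \<open>G \<in> T\<close> T by (simp add: rho_img_eq_sum_fibre[OF M] subset_eq)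
  qed
  also have "\<dots> = (\<Sum>G'\<in>?U. Var G')"
    by (rule sum.group) (use finite_Lstar[OF M] \<open>finite T\<close> in auto)
  finally show ?thesis .
qed

lemma rho_psi0:
  assumes M: "matroid E L" and S: "S \<subseteq> E" and e: "e \<in> S"
  shows "rho E L S (psi0 S (restr_flats L S) e)
       = psi0 E L e - (\<Sum>G\<in>{G\<in>Lstar E L. G \<subseteq> E - S}. Var G)"
proof -
  have "rho E L S (psi0 S (restr_flats L S) e)
      = (\<Sum>G'\<in>{G'\<in>Lstar E L. G' \<inter> S \<in> {G\<in>Lstar S (restr_flats L S). e \<notin> G}}. Var G')"
    unfolding psi0_def using Lstar_restr_flats_subset_Pow by (blast intro: rho_sum_Var[OF M S])
  also have "{G'\<in>Lstar E L. G' \<inter> S \<in> {G\<in>Lstar S (restr_flats L S). e \<notin> G}}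
      = {G\<in>Lstar E L. e \<notin> G} - {G\<in>Lstar E L. G \<subseteq> E - S}"
    using e by (auto simp: Int_in_Lstar_restr_flats_iff dest: Lstar_subset_ground[OF M])
  also have "(\<Sum>G'\<in>\<dots>. Var G') = psi0 E L e - (\<Sum>G\<in>{G\<in>Lstar E L. G \<subseteq> E - S}. Var G)"
    unfolding psi0_def using e finite_Lstar[OF M] by (subst sum_diff) auto
  finally show ?thesis .
qed

lemma rho_psi_inf:
  assumes M: "matroid E L" and S: "S \<subseteq> E" and e: "e \<in> S"
  shows "rho E L S (psi_inf S (restr_flats L S) e)
       = psi_inf E L e - (\<Sum>G\<in>{G\<in>Lstar E L. S \<subseteq> G}. Var G)"
proof -
  have "rho E L S (psi_inf S (restr_flats L S) e)
      = (\<Sum>G'\<in>{G'\<in>Lstar E L. G' \<inter> S \<in> {G\<in>Lstar S (restr_flats L S). e \<in> G}}. Var G')"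
    unfolding psi_inf_def using Lstar_restr_flats_subset_Pow by (blast intro: rho_sum_Var[OF M S])
  also have "{G'\<in>Lstar E L. G' \<inter> S \<in> {G\<in>Lstar S (restr_flats L S). e \<in> G}}
      = {G\<in>Lstar E L. e \<in> G} - {G\<in>Lstar E L. S \<subseteq> G}"
    using e by (auto simp: Int_in_Lstar_restr_flats_iff)
  also have "(\<Sum>G'\<in>\<dots>. Var G') = psi_inf E L e - (\<Sum>G\<in>{G\<in>Lstar E L. S \<subseteq> G}. Var G)"
    unfolding psi_inf_def using e finite_Lstar[OF M] by (subst sum_diff) auto
  finally show ?thesis .
qed

lemma gen_ideal_uminus: "a \<in> gen_ideal B \<Longrightarrow> - a \<in> gen_ideal B"
  using gen_ideal.mult[of a B "-1"] by simp

lemma chow_eq_diff_right: "chow_eq E L p q \<Longrightarrow> chow_eq E L (p - r) (q - r)"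
  by (simp add: chow_eq_def)

lemma psi_inf_chow_eq: "e \<in> E \<Longrightarrow> f \<in> E \<Longrightarrow> chow_eq E L (psi_inf E L e) (psi_inf E L f)"
  unfolding chow_eq_def psi_inf_def by (rule gen_ideal.base) (auto simp: chow_gens_def)

lemma psi0_eq_sum_minus_psi_inf:
  assumes "finite (Lstar E L)"
  shows "psi0 E L e = (\<Sum>G\<in>Lstar E L. Var G) - psi_inf E L e"
proof -
  have "{G\<in>Lstar E L. e \<notin> G} = Lstar E L - {G\<in>Lstar E L. e \<in> G}" by blast
  then show ?thesis
    unfolding psi0_def psi_inf_def using assms by (simp add: sum_diff)
qed

lemma psi0_chow_eq:
  assumes "matroid E L" "e \<in> E" "f \<in> E"
  shows "chow_eq E L (psi0 E L e) (psi0 E L f)"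
  using gen_ideal_uminus psi_inf_chow_eq[OF assms(3,2), of L]
  by (simp add: chow_eq_def psi0_eq_sum_minus_psi_inf finite_Lstar[OF assms(1)])

theorem proposition3p7:
  fixes E :: "'a set" and L :: "'a set set"
  assumes "loopless E L"
  shows "(\<forall>S e f. S \<subseteq> E \<and> e \<in> S \<and> f \<in> E \<longrightarrow>
            chow_eq E L (rho E L S (psi0 S (restr_flats L S) e))
                        (psi0 E L f - (\<Sum>G\<in>{G\<in>Lstar E L. G \<subseteq> E - S}. Var G))
          \<and> chow_eq E L (rho E L S (psi_inf S (restr_flats L S) e))
                        (psi_inf E L f - (\<Sum>G\<in>{G\<in>Lstar E L. S \<subseteq> G}. Var G)))
       \<and> (\<forall>F e f f'. F \<in> Lstar E L \<and> e \<in> E \<and> f \<in> F \<and> f' \<in> E - F \<longrightarrow>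
            chow_eq E L (psi_minus E L F e) (rho E L F (psi_inf F (restr_flats L F) f))
          \<and> chow_eq E L (psi_plus E L F e) (rho E L (E - F) (psi0 (E - F) (restr_flats L (E - F)) f')))"
proof -
  have M: "matroid E L" using assms by (simp add: loopless_def)
  have "E - (E - F) = F" if "F \<in> Lstar E L" for F
    using Lstar_subset_ground[OF M that] by blast
  then show ?thesis
    using Lstar_subset_ground[OF M]
    by (auto simp: rho_psi0[OF M] rho_psi_inf[OF M] psi_minus_def psi_plus_def
                   psi_inf_def[symmetric] psi0_def[symmetric]
             intro!: chow_eq_diff_right psi0_chow_eq[OF M] psi_inf_chow_eq)
qed

end
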